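(* (Metatheory of the CPL sequent calculus.) Fix a set $W$ of worlds with a converse well-founded accessibility relation $\prec$. For all contexts $\Gamma,\Gamma'$, worlds $w$, and propositions $A, C$: (i) (Hypothesis / identity) If $A[w] \in \Gamma$, then $\Gamma \Rightarrow A[w]$. (ii) (Generalized weakening) If $\Gamma \subseteq_w \Gamma'$ and $\Gamma \Rightarrow A[w]$, then $\Gamma' \Rightarrow A[w]$. (iii) (Substitution / cut) If $\Gamma \Rightarrow A[w]$ and $\Gamma, A[w] \Rightarrow C[w]$, then $\Gamma \Rightarrow C[w]$.
   Context: Fix a set $W$ of worlds and a binary accessibility relation $\prec$ on $W$ that is converse well-founded: there is no infinite chain $w_0 \prec w_1 \prec w_2 \prec \cdots$ (in particular $\prec$ is irreflexive and acyclic). $\prec^*$ and $\prec^+$ denote the reflexive–transitive and transitive closures. Propositions: $A,B,C ::= Q \mid \bot \mid A \supset B \mid \Diamond A \mid \Box A$, $Q$ ranging over atomic propositions. A context $\Gamma$ is a finite collection of judgments $A[w]$ ($w\in W$). $\Gamma \subseteq_w \Gamma'$ holds iff (a) for all $w'$ with $w \prec^* w'$, $A[w'] \in \Gamma$ implies $A[w'] \in \Gamma'$, and (b) for all $w'$ with $w \prec^+ w'$, $A[w'] \in \Gamma'$ implies $A[w'] \in \Gamma$. The sequent $\Gamma \Rightarrow A[w]$ (sequent calculus for tethered constructive provability logic CPL) is defined one world at a time (provability at $w$ after provability at all $w'$ with $w \prec^+ w'$; well-defined by converse well-foundedness), as the least relation closed under: (init) $\Gamma, Q[w] \Rightarrow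 Q[w]$ for $Q$ atomic. ($\bot L$) If $\bot[w] \in \Gamma$ then $\Gamma \Rightarrow C[w]$. ($\supset R$) If $\Gamma, A[w] \Rightarrow B[w]$ then $\Gamma \Rightarrow A \supset B[w]$. ($\supset L$) If $A \supset B[w] \in \Gamma$, $\Gamma \Rightarrow A[w]$ and $\Gamma, B[w] \Rightarrow C[w]$, then $\Gamma \Rightarrow C[w]$. ($\Diamond R$) If $w \prec w'$ and $\Gamma \Rightarrow A[w']$ then $\Gamma \Rightarrow \Diamond A[w]$. ($\Box R$) If $\Gamma \Rightarrow A[w']$ for every $w'$ with $w \prec w'$, then $\Gamma \Rightarrow \Box A[w]$. ($\Diamond L$) If $\Diamond A[w] \in \Gamma$ and for every $w'$ with $w \prec w'$, $\Gamma \Rightarrow A[w']$ implies $\Gamma \Rightarrow C[w]$, then $\Gamma \Rightarrow C[w]$. ($\Box L$) If $\Box A[w] \in \Gamma$ and ($\Gamma \Rightarrow A[w']$ for all $w'$ with $w \prec w'$) implies $\Gamma \Rightarrow C[w]$, then $\Gamma \Rightarrow C[w]$. *)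

theory Defs
  imports Main
begin

datatype 'a cform = Atom 'a | Bot | Imp "'a cform" "'a cform" | Dia "'a cform" | Box "'a cform"

text \<open>Judgments A[w] are pairs (A, w); contexts are (finite) sets of judgments.
  Worlds are the elements of type 'w; R w w' means w \<prec> w'.\<close>
type_synonym ('a, 'w) ctx = "('a cform \<times> 'w) set"

definition conv_wf :: "('w \<Rightarrow> 'w \<Rightarrow> bool) \<Rightarrow> bool" where
  "conv_wf R \<longleftrightarrow> \<not> (\<exists>f :: nat \<Rightarrow> 'w. \<forall>i. R (f i) (f (Suc i)))"

definition ctx_sub :: "('w \<Rightarrow> 'w \<Rightarrow> bool) \<Rightarrow> 'w \<Rightarrow> ('a, 'w) ctx \<Rightarrow> ('a, 'w) ctx \<Rightarrow> bool" where
  "ctx_sub R w \<Gamma> \<Gamma>' \<longleftrightarrow>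
     (\<forall>A w'. R\<^sup>*\<^sup>* w w' \<longrightarrow> (A, w') \<in> \<Gamma> \<longrightarrow> (A, w') \<in> \<Gamma>') \<and>
     (\<forall>A w'. R\<^sup>+\<^sup>+ w w' \<longrightarrow> (A, w') \<in> \<Gamma>' \<longrightarrow> (A, w') \<in> \<Gamma>)"

text \<open>Provability at a single world w, given provability hi at the worlds above w
  (hi w' \<Gamma> A means \<Gamma> \<Rightarrow> A[w']; only consulted for w \<prec> w').\<close>
inductive seq_step :: "('w \<Rightarrow> 'w \<Rightarrow> bool) \<Rightarrow> ('w \<Rightarrow> ('a, 'w) ctx \<Rightarrow> 'a cform \<Rightarrow> bool)
    \<Rightarrow> 'w \<Rightarrow> ('a, 'w) ctx \<Rightarrow> 'a cform \<Rightarrow> bool"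
  for R :: "'w \<Rightarrow> 'w \<Rightarrow> bool" and hi :: "'w \<Rightarrow> ('a, 'w) ctx \<Rightarrow> 'a cform \<Rightarrow> bool" and w :: 'w
where
  init: "(Atom Q, w) \<in> \<Gamma> \<Longrightarrow> seq_step R hi w \<Gamma> (Atom Q)"
| botL: "(Bot, w) \<in> \<Gamma> \<Longrightarrow> seq_step R hi w \<Gamma> C"
| impR: "seq_step R hi w (insert (A, w) \<Gamma>) B \<Longrightarrow> seq_step R hi w \<Gamma> (Imp A B)"
| impL: "(Imp A B, w) \<in> \<Gamma> \<Longrightarrow> seq_step R hi w \<Gamma> A \<Longrightarrow> seq_step R hi w (insert (B, w) \<Gamma>) C
          \<Longrightarrow> seq_step R hi w \<Gamma> C"
| diaR: "R w w' \<Longrightarrow> hi w' \<Gamma> A \<Longrightarrow> seq_step R hi w \<Gamma> (Dia A)"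
| boxR: "(\<forall>w'. R w w' \<longrightarrow> hi w' \<Gamma> A) \<Longrightarrow> seq_step R hi w \<Gamma> (Box A)"
| diaL: "(Dia A, w) \<in> \<Gamma> \<Longrightarrow> (\<forall>w'. R w w' \<longrightarrow> hi w' \<Gamma> A \<longrightarrow> seq_step R hi w \<Gamma> C)
          \<Longrightarrow> seq_step R hi w \<Gamma> C"
| boxL: "(Box A, w) \<in> \<Gamma> \<Longrightarrow> ((\<forall>w'. R w w' \<longrightarrow> hi w' \<Gamma> A) \<longrightarrow> seq_step R hi w \<Gamma> C)
          \<Longrightarrow> seq_step R hi w \<Gamma> C"

definition seq :: "('w \<Rightarrow> 'w \<Rightarrow> bool) \<Rightarrow> 'w \<Rightarrow> ('a, 'w) ctx \<Rightarrow> 'a cform \<Rightarrow> bool" where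
  "seq R = wfrec {(w', w). R w w'} (\<lambda>f w. seq_step R f w)"

end

theory Submission
  imports Defs
begin

text \<open>
  Provability at w consults provability only at the successors of w, so weakening is proved by
  well-founded induction on worlds along the converse of R, nested with rule induction at w.
  Clause (b) of the generalized inclusion is what lets the premises of the modal left rules,
  which speak about provability above w, move from the larger context back to the smaller one. Cut is by induction on the size of the cut
  formula and then on its derivation: left rules permute upwards, and if the derivation ends
  with a right rule, the premises of that rule eliminate the cut formula from any derivation
  using it. There only implications need cuts on smaller formulas, since the modal left rules
  take provability of the subformula as a hypothesis.
\<close>

lemma seq_step_cong:
  assumes "seq_step R hi w \<Gamma> A" and "\<And>w'. R w w' \<Longrightarrow> hi w' = hi' w'"
  shows "seq_step R hi' w \<Gamma> A"
  using assms
proof induction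
  case (impL A B \<Gamma> C)
  show ?case by (rule seq_step.impL[of A B]) (use impL in blast)+
qed (simp_all add: seq_step.init seq_step.botL seq_step.impR seq_step.diaR seq_step.boxR
                   seq_step.diaL seq_step.boxL)

lemma ctx_sub_memD: "ctx_sub R w \<Gamma> \<Gamma>' \<Longrightarrow> (X, w) \<in> \<Gamma> \<Longrightarrow> (X, w) \<in> \<Gamma>'"
  unfolding ctx_sub_def by blast

lemma ctx_sub_succ: "ctx_sub R w \<Gamma> \<Gamma>' \<Longrightarrow> R w w' \<Longrightarrow> ctx_sub R w' \<Gamma> \<Gamma>'"
  unfolding ctx_sub_def by (meson converse_rtranclp_into_rtranclp tranclp_into_tranclp2)

lemma ctx_sub_succ_swap: "ctx_sub R w \<Gamma> \<Gamma>' \<Longrightarrow> R w w' \<Longrightarrow> ctx_sub R w' \<Gamma>' \<Gamma>"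
  unfolding ctx_sub_def
  by (meson converse_rtranclp_into_rtranclp rtranclp_into_tranclp2 tranclp_into_rtranclp)

fun right_premises :: "('w \<Rightarrow> 'w \<Rightarrow> bool) \<Rightarrow> 'w \<Rightarrow> ('a, 'w) ctx \<Rightarrow> 'a cform \<Rightarrow> bool" where
  "right_premises R w \<Gamma> (Imp X Y) = seq R w (insert (X, w) \<Gamma>) Y"
| "right_premises R w \<Gamma> (Dia X) = (\<exists>w'. R w w' \<and> seq R w' \<Gamma> X)"
| "right_premises R w \<Gamma> (Box X) = (\<forall>w'. R w w' \<longrightarrow> seq R w' \<Gamma> X)"
| "right_premises R w \<Gamma> (Atom Q) = False"
| "right_premises R w \<Gamma> Bot = False"

definition cut_admissible :: "('w \<Rightarrow> 'w \<Rightarrow> bool) \<Rightarrow> 'a cform \<Rightarrow> bool" where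
  "cut_admissible R A \<longleftrightarrow>
     (\<forall>w \<Gamma> C. seq R w \<Gamma> A \<longrightarrow> seq R w (insert (A, w) \<Gamma>) C \<longrightarrow> seq R w \<Gamma> C)"

context
  fixes R :: "'w \<Rightarrow> 'w \<Rightarrow> bool"
  assumes conv_wf: "conv_wf R"
begin

lemma wf_converse_rel: "wf {(w', w). R w w'}"
  using conv_wf unfolding conv_wf_def wf_iff_no_infinite_down_chain by auto

lemma not_tranclp_self: "\<not> R\<^sup>+\<^sup>+ w w"
proof
  have "(v, u) \<in> {(w', w). R w w'}\<^sup>+" if "R\<^sup>+\<^sup>+ u v" for u v
    using that by induction (auto intro: trancl_into_trancl2)
  moreover assume "R\<^sup>+\<^sup>+ w w"
  ultimately show False
    using wf_not_refl[OF wf_trancl[OF wf_converse_rel]] by blast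
qed

lemma seq_unfold: "seq R w \<Gamma> A \<longleftrightarrow> seq_step R (seq R) w \<Gamma> A"
proof -
  have "seq R w = seq_step R (cut (seq R) {(w', w). R w w'} w) w"
    unfolding seq_def by (subst wfrec[OF wf_converse_rel]) simp
  also have "\<dots> = seq_step R (seq R) w"
    by (intro ext iffI; erule seq_step_cong; simp add: cut_def)
  finally show ?thesis by (rule fun_cong[OF fun_cong])
qed

lemmas seqI = seq_unfold[THEN iffD2] and seqD = seq_unfold[THEN iffD1]

lemma ctx_sub_insert: "ctx_sub R w \<Gamma> \<Gamma>' \<Longrightarrow> ctx_sub R w (insert (X, w) \<Gamma>) (insert (X, w) \<Gamma>')"
  unfolding ctx_sub_def using not_tranclp_self by blast

lemma ctx_sub_insert_right: "ctx_sub R w \<Gamma> (insert (X, w) \<Gamma>)"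
  unfolding ctx_sub_def using not_tranclp_self by blast

lemma seq_weaken: "seq R w \<Gamma> A \<Longrightarrow> ctx_sub R w \<Gamma> \<Gamma>' \<Longrightarrow> seq R w \<Gamma>' A"
proof (induction w arbitrary: \<Gamma> \<Gamma>' A rule: wf_induct_rule[OF wf_converse_rel])
  case (1 w)
  have succ_weaken: "seq R w' \<Gamma>' B"
    if "R w w'" "seq R w' \<Gamma> B" "ctx_sub R w \<Gamma> \<Gamma>'" for w' \<Gamma> \<Gamma>' and B :: "'a cform"
    using 1(1)[of w'] that ctx_sub_succ[OF that(3,1)] by simp
  have succ_strengthen: "seq R w' \<Gamma> B"
    if "R w w'" "seq R w' \<Gamma>' B" "ctx_sub R w \<Gamma> \<Gamma>'" for w' \<Gamma> \<Gamma>' and B :: "'a cform"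
    using 1(1)[of w'] that ctx_sub_succ_swap[OF that(3,1)] by simp
  have "seq_step R (seq R) w \<Gamma>' A" if "seq_step R (seq R) w \<Gamma> A" "ctx_sub R w \<Gamma> \<Gamma>'"
    for \<Gamma> \<Gamma>' and A :: "'a cform"
    using that
  proof (induction arbitrary: \<Gamma>' rule: seq_step.induct)
    case (init Q \<Gamma>)
    then show ?case by (blast intro: seq_step.init ctx_sub_memD)
  next
    case (botL \<Gamma> C)
    then show ?case by (blast intro: seq_step.botL ctx_sub_memD)
  next
    case (impR A \<Gamma> B)
    then show ?case by (blast intro: seq_step.impR ctx_sub_insert)
  next
    case (impL A B \<Gamma> C)
    show ?case
      by (rule seq_step.impL[of A B]) (use impL in \<open>blast intro: ctx_sub_insert ctx_sub_memD\<close>)+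
  next
    case (diaR w' \<Gamma> A)
    then show ?case by (blast intro: seq_step.diaR succ_weaken)
  next
    case (boxR \<Gamma> A)
    then show ?case by (blast intro: seq_step.boxR succ_weaken)
  next
    case (diaL A \<Gamma> C)
    show ?case
      by (rule seq_step.diaL[of A]) (use diaL in \<open>blast intro: succ_strengthen ctx_sub_memD\<close>)+
  next
    case (boxL A \<Gamma> C)
    show ?case
      by (rule seq_step.boxL[of A]) (use boxL in \<open>blast intro: succ_strengthen ctx_sub_memD\<close>)+
  qed
  with 1(2,3) show ?case by (blast intro: seqI dest: seqD)
qed

lemma seq_insert: "seq R w \<Gamma> C \<Longrightarrow> seq R w (insert (X, w) \<Gamma>) C"
  using seq_weaken ctx_sub_insert_right by blast

lemma seq_insert_below_iff: "R w w' \<Longrightarrow> seq R w' (insert (X, w) \<Gamma>) B \<longleftrightarrow> seq R w' \<Gamma> B"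
  using seq_weaken ctx_sub_succ[OF ctx_sub_insert_right] ctx_sub_succ_swap[OF ctx_sub_insert_right] by blast

lemma seq_hyp: "(A, w) \<in> \<Gamma> \<Longrightarrow> seq R w \<Gamma> A"
proof (induction A arbitrary: w \<Gamma>)
  case (Atom Q)
  then show ?case by (intro seqI seq_step.init)
next
  case Bot
  then show ?case by (intro seqI seq_step.botL)
next
  case (Imp X Y)
  have "seq_step R (seq R) w (insert (X, w) \<Gamma>) Y"
    by (rule seq_step.impL[of X Y]) (use Imp in \<open>auto intro: seqD\<close>)
  then show ?case by (intro seqI seq_step.impR)
next
  case (Dia X)
  show ?case
    by (rule seqI, rule seq_step.diaL[OF Dia.prems]) (blast intro: seq_step.diaR)
next
  case (Box X)
  show ?case
    by (rule seqI, rule seq_step.boxL[OF Box.prems]) (blast intro: seq_step.boxR)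
qed

lemma right_premises_weaken:
  "right_premises R w \<Gamma> A \<Longrightarrow> ctx_sub R w \<Gamma> \<Gamma>' \<Longrightarrow> right_premises R w \<Gamma>' A"
  by (cases A) (auto intro: seq_weaken ctx_sub_insert dest: ctx_sub_succ)

lemma principal_cut:
  fixes A :: "'a cform"
  assumes cut_smaller: "\<And>B :: 'a cform. size B < size A \<Longrightarrow> cut_admissible R B"
  shows "seq_step R (seq R) w \<Delta> C \<Longrightarrow> \<Delta> = insert (A, w) \<Gamma> \<Longrightarrow> right_premises R w \<Gamma> A
    \<Longrightarrow> seq R w \<Gamma> C"
proof (induction arbitrary: \<Gamma> rule: seq_step.induct)
  case (init Q \<Delta>)
  then show ?case by (cases "A = Atom Q") (auto intro: seqI seq_step.init)
next
  case (botL \<Delta> C)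
  then show ?case by (cases "A = Bot") (auto intro: seqI seq_step.botL)
next
  case (impR X \<Delta> B)
  have "right_premises R w (insert (X, w) \<Gamma>) A"
    using impR.prems(2) ctx_sub_insert_right by (rule right_premises_weaken)
  with impR have "seq R w (insert (X, w) \<Gamma>) B"
    by (simp add: insert_commute)
  then show ?case by (blast intro: seqI seq_step.impR seqD)
next
  case (impL X Y \<Delta> C)
  have X: "seq R w \<Gamma> X"
    using impL by blast
  have "right_premises R w (insert (Y, w) \<Gamma>) A"
    using impL.prems(2) ctx_sub_insert_right by (rule right_premises_weaken)
  with impL have YC: "seq R w (insert (Y, w) \<Gamma>) C"
    by (simp add: insert_commute)
  show ?case
  proof (cases "A = Imp X Y")
    case True
    with impL.prems have "seq R w (insert (X, w) \<Gamma>) Y"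
      by simp
    with X have "seq R w \<Gamma> Y"
      using cut_smaller[of X] True by (simp add: cut_admissible_def)
    with YC show ?thesis
      using cut_smaller[of Y] True by (simp add: cut_admissible_def)
  next
    case False
    with impL.prems have "(Imp X Y, w) \<in> \<Gamma>"
      using impL.hyps(1) by simp
    with X YC show ?thesis
      by (blast intro: seqI seq_step.impL[of X Y] seqD)
  qed
next
  case (diaR w' \<Delta> B)
  then show ?case by (auto intro: seqI seq_step.diaR simp: seq_insert_below_iff)
next
  case (boxR \<Delta> B)
  then show ?case by (auto intro: seqI seq_step.boxR simp: seq_insert_below_iff)
next
  case (diaL X \<Delta> C)
  have C: "seq R w \<Gamma> C" if "R w w'" "seq R w' \<Gamma> X" for w'
    using diaL that by (simp add: seq_insert_below_iff)
  show ?case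
  proof (cases "A = Dia X")
    case True
    with diaL.prems C show ?thesis by auto
  next
    case False
    with diaL.prems have "(Dia X, w) \<in> \<Gamma>"
      using diaL.hyps(1) by simp
    with C show ?thesis
      by (blast intro: seqI seq_step.diaL[of X] seqD)
  qed
next
  case (boxL X \<Delta> C)
  have C: "seq R w \<Gamma> C" if "\<forall>w'. R w w' \<longrightarrow> seq R w' \<Gamma> X"
    using boxL that by (simp add: seq_insert_below_iff)
  show ?case
  proof (cases "A = Box X")
    case True
    with boxL.prems C show ?thesis by auto
  next
    case False
    with boxL.prems have "(Box X, w) \<in> \<Gamma>"
      using boxL.hyps(1) by simp
    with C show ?thesis
      by (blast intro: seqI seq_step.boxL[of X] seqD)
  qed
qed

lemma cut_admissible_step:
  fixes A :: "'a cform"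
  assumes cut_smaller: "\<And>B :: 'a cform. size B < size A \<Longrightarrow> cut_admissible R B"
  shows "cut_admissible R A"
proof -
  have principal: "seq R w \<Gamma> C"
    if "seq_step R (seq R) w (insert (A, w) \<Gamma>) C" "right_premises R w \<Gamma> A" for w \<Gamma> C
    by (rule principal_cut[OF _ that(1) refl that(2)]) (rule cut_smaller)
  have "seq R w \<Gamma> C" if "seq_step R (seq R) w \<Gamma> F" "F = A" "seq R w (insert (A, w) \<Gamma>) C"
    for w \<Gamma> F C
    using that
  proof (induction arbitrary: C rule: seq_step.induct)
    case (init Q \<Gamma>)
    then show ?case by (simp add: insert_absorb)
  next
    case (botL \<Gamma> F)
    show ?case by (rule seqI[OF seq_step.botL[OF botL.hyps]])
  next
    case (impR X \<Gamma> Y)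
    then have "right_premises R w \<Gamma> A" by (auto intro: seqI)
    then show ?case by (rule principal[OF seqD[OF impR.prems(2)]])
  next
    case (impL X Y \<Gamma> F)
    have "seq R w (insert (A, w) (insert (Y, w) \<Gamma>)) C"
      using seq_insert[OF impL.prems(2), where X = Y] by (simp add: insert_commute)
    then have "seq R w (insert (Y, w) \<Gamma>) C"
      by (rule impL.IH(2)[OF impL.prems(1)])
    then show ?case by (rule seqI[OF seq_step.impL[OF impL.hyps(1,2) seqD]])
  next
    case (diaR w' \<Gamma> X)
    then have "right_premises R w \<Gamma> A" by auto
    then show ?case by (rule principal[OF seqD[OF diaR.prems(2)]])
  next
    case (boxR \<Gamma> X)
    then have "right_premises R w \<Gamma> A" by auto
    then show ?case by (rule principal[OF seqD[OF boxR.prems(2)]])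
  next
    case (diaL X \<Gamma> F)
    show ?case
      by (rule seqI, rule seq_step.diaL[of X]) (use diaL in \<open>blast dest: seqD\<close>)+
  next
    case (boxL X \<Gamma> F)
    show ?case
      by (rule seqI, rule seq_step.boxL[of X]) (use boxL in \<open>blast dest: seqD\<close>)+
  qed
  then show ?thesis
    unfolding cut_admissible_def by (blast dest: seqD)
qed

lemma seq_cut: "seq R w \<Gamma> A \<Longrightarrow> seq R w (insert (A, w) \<Gamma>) C \<Longrightarrow> seq R w \<Gamma> C"
proof -
  have "cut_admissible R A"
  proof (induction "size A" arbitrary: A rule: less_induct)
    case less
    then show ?case by (blast intro: cut_admissible_step)
  qed
  then show "seq R w \<Gamma> A \<Longrightarrow> seq R w (insert (A, w) \<Gamma>) C \<Longrightarrow> seq R w \<Gamma> C"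
    unfolding cut_admissible_def by blast
qed

end

theorem theorem2:
  fixes R :: "'w \<Rightarrow> 'w \<Rightarrow> bool"
  assumes "conv_wf R"
  shows "(\<forall>(\<Gamma> :: ('a, 'w) ctx) A w. finite \<Gamma> \<longrightarrow> (A, w) \<in> \<Gamma> \<longrightarrow> seq R w \<Gamma> A)
       \<and> (\<forall>(\<Gamma> :: ('a, 'w) ctx) \<Gamma>' A w. finite \<Gamma> \<longrightarrow> finite \<Gamma>' \<longrightarrow>
            ctx_sub R w \<Gamma> \<Gamma>' \<longrightarrow> seq R w \<Gamma> A \<longrightarrow> seq R w \<Gamma>' A)
       \<and> (\<forall>(\<Gamma> :: ('a, 'w) ctx) A C w. finite \<Gamma> \<longrightarrow>
            seq R w \<Gamma> A \<longrightarrow> seq R w (insert (A, w) \<Gamma>) C \<longrightarrow> seq R w \<Gamma> C)"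
proof (intro conjI allI impI)
  fix \<Gamma> \<Gamma>' :: "('a, 'w) ctx" and A C w
  show "(A, w) \<in> \<Gamma> \<Longrightarrow> seq R w \<Gamma> A"
    by (rule seq_hyp[OF assms])
  show "ctx_sub R w \<Gamma> \<Gamma>' \<Longrightarrow> seq R w \<Gamma> A \<Longrightarrow> seq R w \<Gamma>' A"
    by (rule seq_weaken[OF assms])
  show "seq R w \<Gamma> A \<Longrightarrow> seq R w (insert (A, w) \<Gamma>) C \<Longrightarrow> seq R w \<Gamma> C"
    by (rule seq_cut[OF assms])
qed

end
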